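(* Let $A$ be a unital algebra over $\mathbb{F}_2$, $(\Omega^1,{\rm d})$ a first order differential calculus on $A$, and $\theta\in\Omega^1$ any element. Let $\bar A$ be the set $A$ with product $a\,\bar\cdot\,b=ab+a+b$ and addition $a\,\bar+\,b=a+b+1$. Let $\bar\Omega^1$ be the set $\Omega^1$ with addition, bimodule structure and differential $\omega\,\bar+\,\eta=\theta+\omega+\eta$, $a\,\bar\cdot\,\omega=a\theta+(a+1)\omega$, $\omega\,\bar\cdot\,a=\theta a+\omega(a+1)$, $\bar{\rm d} a=\theta+{\rm d} a$. Then $(\bar\Omega^1,\bar{\rm d})$ is a first order differential calculus on $\bar A$. Moreover: (i) the maps $a\mapsto\bar a=1+a$ on $A$ and $\omega\mapsto\bar\omega=\theta+\omega$ on $\Omega^1$ make $\bar{\ }:A\to\bar A$ a diffeomorphism; (ii) $\theta$ is the zero element of $\bar\Omega^1$; (iii) ${\rm d} a=\theta a+a\theta$ for all $a\in A$ (i.e. $\theta$ makes $\Omega^1$ inner) if and only if $\bar{\rm d} a=a\,\bar\cdot\,0\ \bar+\ 0\,\bar\cdot\,a$ for all $a$ (i.e. the zero element $0$ of $\Omega^1$ makes $\bar\Omega^1$ inner).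
   Context: A first order differential calculus on a unital algebra $B$ over $\mathbb{F}_2$ is a $B$-bimodule $\Omega^1_B$ with a linear map ${\rm d}:B\to\Omega^1_B$ satisfying ${\rm d}(ab)=({\rm d} a)b+a{\rm d} b$ and such that $\Omega^1_B$ is spanned by elements $a{\rm d} b$. An algebra isomorphism $\phi:A\to B$ between algebras with calculi is a diffeomorphism if there is a linear map $\phi_*:\Omega^1_A\to\Omega^1_B$ with $\phi_*(a\omega)=\phi(a)\phi_*(\omega)$, $\phi_*(\omega a)=\phi_*(\omega)\phi(a)$ and $\phi_*\circ{\rm d}={\rm d}\circ\phi$. The calculus is inner by $\theta$ if ${\rm d} a=\theta a-a\theta$ for all $a$ (over $\mathbb{F}_2$, signs are irrelevant). $\bar A$ is a unital $\mathbb{F}_2$-algebra with zero $1$ and unit $0$. *)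

theory Defs
  imports "HOL-Algebra.QuotRing"
begin

definition f2_algebra :: "('a, 'm) ring_scheme \<Rightarrow> bool" where
  "f2_algebra A \<longleftrightarrow> ring A \<and> \<one>\<^bsub>A\<^esub> \<oplus>\<^bsub>A\<^esub> \<one>\<^bsub>A\<^esub> = \<zero>\<^bsub>A\<^esub>"

record ('a, 'w) calc =
  omg  :: "'w set"
  wadd :: "'w \<Rightarrow> 'w \<Rightarrow> 'w"
  lact :: "'a \<Rightarrow> 'w \<Rightarrow> 'w"
  ract :: "'w \<Rightarrow> 'a \<Rightarrow> 'w"
  dd   :: "'a \<Rightarrow> 'w"

definition is_wzero :: "('a, 'w) calc \<Rightarrow> 'w \<Rightarrow> bool" where
  "is_wzero C z \<longleftrightarrow> z \<in> omg C \<and> (\<forall>w\<in>omg C. wadd C z w = w)"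

text \<open>Omega^1 is an A-bimodule (over F_2, vector space structure = abelian group structure).\<close>
definition bimodule :: "('a, 'm) ring_scheme \<Rightarrow> ('a, 'w) calc \<Rightarrow> bool" where
  "bimodule A C \<longleftrightarrow>
     (\<forall>w\<in>omg C. \<forall>v\<in>omg C. wadd C w v \<in> omg C) \<and>
     (\<forall>a\<in>carrier A. \<forall>w\<in>omg C. lact C a w \<in> omg C \<and> ract C w a \<in> omg C) \<and>
     (\<forall>u\<in>omg C. \<forall>v\<in>omg C. \<forall>w\<in>omg C. wadd C (wadd C u v) w = wadd C u (wadd C v w)) \<and>
     (\<forall>u\<in>omg C. \<forall>v\<in>omg C. wadd C u v = wadd C v u) \<and>
     (\<exists>z. is_wzero C z \<and> (\<forall>w\<in>omg C. \<exists>v\<in>omg C. wadd C w v = z)) \<and>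
     (\<forall>a\<in>carrier A. \<forall>v\<in>omg C. \<forall>w\<in>omg C.
        lact C a (wadd C v w) = wadd C (lact C a v) (lact C a w) \<and>
        ract C (wadd C v w) a = wadd C (ract C v a) (ract C w a)) \<and>
     (\<forall>a\<in>carrier A. \<forall>b\<in>carrier A. \<forall>w\<in>omg C.
        lact C (a \<oplus>\<^bsub>A\<^esub> b) w = wadd C (lact C a w) (lact C b w) \<and>
        ract C w (a \<oplus>\<^bsub>A\<^esub> b) = wadd C (ract C w a) (ract C w b) \<and>
        lact C (a \<otimes>\<^bsub>A\<^esub> b) w = lact C a (lact C b w) \<and>
        ract C w (a \<otimes>\<^bsub>A\<^esub> b) = ract C (ract C w a) b \<and>
        lact C a (ract C w b) = ract C (lact C a w) b) \<and>
     (\<forall>w\<in>omg C. lact C \<one>\<^bsub>A\<^esub> w = w \<and> ract C w \<one>\<^bsub>A\<^esub> = w)"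

inductive_set dspan :: "('a, 'm) ring_scheme \<Rightarrow> ('a, 'w) calc \<Rightarrow> 'w set"
  for A C where
  gen: "a \<in> carrier A \<Longrightarrow> b \<in> carrier A \<Longrightarrow> lact C a (dd C b) \<in> dspan A C"
| add: "x \<in> dspan A C \<Longrightarrow> y \<in> dspan A C \<Longrightarrow> wadd C x y \<in> dspan A C"

definition fodc :: "('a, 'm) ring_scheme \<Rightarrow> ('a, 'w) calc \<Rightarrow> bool" where
  "fodc A C \<longleftrightarrow> bimodule A C \<and>
     (\<forall>a\<in>carrier A. dd C a \<in> omg C) \<and>
     (\<forall>a\<in>carrier A. \<forall>b\<in>carrier A. dd C (a \<oplus>\<^bsub>A\<^esub> b) = wadd C (dd C a) (dd C b)) \<and>
     (\<forall>a\<in>carrier A. \<forall>b\<in>carrier A.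
        dd C (a \<otimes>\<^bsub>A\<^esub> b) = wadd C (ract C (dd C a) b) (lact C a (dd C b))) \<and>
     omg C \<subseteq> dspan A C"

definition diffeo_via :: "('a, 'm) ring_scheme \<Rightarrow> ('a, 'w) calc \<Rightarrow>
    ('b, 'n) ring_scheme \<Rightarrow> ('b, 'v) calc \<Rightarrow> ('a \<Rightarrow> 'b) \<Rightarrow> ('w \<Rightarrow> 'v) \<Rightarrow> bool" where
  "diffeo_via A C B D phi phis \<longleftrightarrow>
     phi \<in> ring_iso A B \<and>
     (\<forall>w\<in>omg C. phis w \<in> omg D) \<and>
     (\<forall>w\<in>omg C. \<forall>v\<in>omg C. phis (wadd C w v) = wadd D (phis w) (phis v)) \<and>
     (\<forall>a\<in>carrier A. \<forall>w\<in>omg C. phis (lact C a w) = lact D (phi a) (phis w)) \<and>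
     (\<forall>a\<in>carrier A. \<forall>w\<in>omg C. phis (ract C w a) = ract D (phis w) (phi a)) \<and>
     (\<forall>a\<in>carrier A. phis (dd C a) = dd D (phi a))"

text \<open>The calculus is inner by theta: d a = theta a - a theta (signs irrelevant over F_2).\<close>
definition inner_by :: "('a, 'm) ring_scheme \<Rightarrow> ('a, 'w) calc \<Rightarrow> 'w \<Rightarrow> bool" where
  "inner_by A C th \<longleftrightarrow> (\<forall>a\<in>carrier A. dd C a = wadd C (ract C th a) (lact C a th))"

definition bar_alg :: "('a, 'm) ring_scheme \<Rightarrow> 'a ring" where
  "bar_alg A = \<lparr>carrier = carrier A,
     mult = (\<lambda>a b. a \<otimes>\<^bsub>A\<^esub> b \<oplus>\<^bsub>A\<^esub> a \<oplus>\<^bsub>A\<^esub> b),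
     one = \<zero>\<^bsub>A\<^esub>,
     zero = \<one>\<^bsub>A\<^esub>,
     add = (\<lambda>a b. a \<oplus>\<^bsub>A\<^esub> b \<oplus>\<^bsub>A\<^esub> \<one>\<^bsub>A\<^esub>)\<rparr>"

definition bar_calc :: "('a, 'm) ring_scheme \<Rightarrow> ('a, 'w) calc \<Rightarrow> 'w \<Rightarrow> ('a, 'w) calc" where
  "bar_calc A C th = \<lparr>omg = omg C,
     wadd = (\<lambda>w v. wadd C th (wadd C w v)),
     lact = (\<lambda>a w. wadd C (lact C a th) (lact C (a \<oplus>\<^bsub>A\<^esub> \<one>\<^bsub>A\<^esub>) w)),
     ract = (\<lambda>w a. wadd C (ract C th a) (ract C w (a \<oplus>\<^bsub>A\<^esub> \<one>\<^bsub>A\<^esub>))),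
     dd = (\<lambda>a. wadd C th (dd C a))\<rparr>"

end

theory Submission
  imports Defs
begin

(* Over F_2 the translations a \<mapsto> 1 + a and \<omega> \<mapsto> \<theta> + \<omega> are involutions, and the bar
   structures are exactly those of A and \<Omega>\<^sup>1 transported along them: for instance
   (1 + a) \<cdot>bar (1 + b) = 1 + ab and (1 + a) \<cdot>bar (\<theta> + \<omega>) = \<theta> + a\<omega>. Checking this is the
   diffeomorphism property (i). Everything else is invariant under transport along a
   diffeomorphism that is bijective on 1-forms: being an F_2 algebra with a first order
   calculus, the zero 0 going to \<theta> + 0 = \<theta> (ii), and innerness by \<theta> going to innerness
   by \<theta> + \<theta> = 0 (iii). *)

lemma diffeo_viaD:
  assumes "diffeo_via A C B D phi psi"
  shows "phi \<in> ring_iso A B" and "carrier B = phi ` carrier A"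
    and "\<And>w. w \<in> omg C \<Longrightarrow> psi w \<in> omg D"
    and "\<And>w v. w \<in> omg C \<Longrightarrow> v \<in> omg C \<Longrightarrow> psi (wadd C w v) = wadd D (psi w) (psi v)"
    and "\<And>a w. a \<in> carrier A \<Longrightarrow> w \<in> omg C \<Longrightarrow> psi (lact C a w) = lact D (phi a) (psi w)"
    and "\<And>a w. a \<in> carrier A \<Longrightarrow> w \<in> omg C \<Longrightarrow> psi (ract C w a) = ract D (psi w) (phi a)"
    and "\<And>a. a \<in> carrier A \<Longrightarrow> psi (dd C a) = dd D (phi a)"
proof -
  show iso: "phi \<in> ring_iso A B"
    using assms unfolding diffeo_via_def by simp
  show "carrier B = phi ` carrier A"
    using bij_betw_imp_surj_on[OF ring_iso_memE(5)[OF iso]] by simp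
qed (use assms in \<open>auto simp: diffeo_via_def\<close>)

lemma is_wzero_transfer:
  assumes "is_wzero C z" and "diffeo_via A C B D phi psi" and "omg D = psi ` omg C"
  shows "is_wzero D (psi z)"
  using assms unfolding is_wzero_def by (auto simp: diffeo_viaD(4)[OF assms(2), symmetric])

lemma bimodule_transfer:
  assumes "ring A" and "bimodule A C" and "diffeo_via A C B D phi psi"
    and omgD: "omg D = psi ` omg C"
  shows "bimodule B D"
proof -
  note psi = diffeo_viaD[OF assms(3)]
  note phi = ring_iso_memE[OF psi(1)]
  have closed: "wadd C w v \<in> omg C" "lact C a w \<in> omg C" "ract C w a \<in> omg C"
    if "a \<in> carrier A" "w \<in> omg C" "v \<in> omg C" for a w v
    using assms(2) that unfolding bimodule_def by auto
  obtain z where z: "is_wzero C z" "\<forall>w\<in>omg C. \<exists>v\<in>omg C. wadd C w v = z"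
    using assms(2) unfolding bimodule_def by blast
  show ?thesis
    unfolding bimodule_def
  proof (intro conjI)
    show "\<exists>z. is_wzero D z \<and> (\<forall>w\<in>omg D. \<exists>v\<in>omg D. wadd D w v = z)"
    proof (intro exI conjI)
      show "is_wzero D (psi z)"
        using is_wzero_transfer[OF z(1) assms(3) omgD] .
      show "\<forall>w\<in>omg D. \<exists>v\<in>omg D. wadd D w v = psi z"
        using z(2) closed unfolding omgD by (fastforce simp: psi(4)[symmetric])
    qed
  qed (use assms(2) in \<open>auto simp: bimodule_def omgD psi(2) psi(4-6)[symmetric] phi(2-4)[symmetric]
         closed ring.ring_simprules[OF assms(1)]\<close>)
qed

lemma dspan_subset_omg:
  assumes "fodc A C"
  shows "dspan A C \<subseteq> omg C"
proof
  fix x assume "x \<in> dspan A C"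
  then show "x \<in> omg C"
    by induction (use assms in \<open>auto simp: fodc_def bimodule_def\<close>)
qed

lemma dspan_transfer:
  assumes "fodc A C" and "diffeo_via A C B D phi psi" and "x \<in> dspan A C"
  shows "psi x \<in> dspan B D"
  using assms(3)
proof induction
  case (gen a b)
  then have "psi (lact C a (dd C b)) = lact D (phi a) (dd D (phi b))"
    using assms(1) by (simp add: diffeo_viaD[OF assms(2)] fodc_def)
  moreover have "phi a \<in> carrier B" "phi b \<in> carrier B"
    using gen ring_iso_memE(1)[OF diffeo_viaD(1)[OF assms(2)]] by auto
  ultimately show ?case by (simp add: dspan.gen)
next
  case (add x y)
  then have "psi (wadd C x y) = wadd D (psi x) (psi y)"
    using dspan_subset_omg[OF assms(1)] diffeo_viaD(4)[OF assms(2)] by blast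
  with add show ?case by (simp add: dspan.add)
qed

lemma fodc_transfer:
  assumes "ring A" and "fodc A C" and "diffeo_via A C B D phi psi"
    and omgD: "omg D = psi ` omg C"
  shows "fodc B D"
proof -
  note psi = diffeo_viaD[OF assms(3)]
  note phi = ring_iso_memE[OF psi(1)]
  have closed: "wadd C w v \<in> omg C" "lact C a w \<in> omg C" "ract C w a \<in> omg C" "dd C a \<in> omg C"
    if "a \<in> carrier A" "w \<in> omg C" "v \<in> omg C" for a w v
    using assms(2) that unfolding fodc_def bimodule_def by auto
  have "omg D \<subseteq> dspan B D"
    using assms(2) dspan_transfer[OF assms(2,3)] unfolding fodc_def omgD by blast
  moreover have "bimodule B D"
    using bimodule_transfer[OF assms(1) _ assms(3) omgD] assms(2) unfolding fodc_def by blast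
  ultimately show ?thesis
    using assms(2) unfolding fodc_def omgD psi(2)
    by (auto simp: psi(3) psi(4-7)[symmetric] phi(2,3)[symmetric] closed
        ring.ring_simprules[OF assms(1)])
qed

lemma inner_by_transfer:
  assumes "fodc A C" and "diffeo_via A C B D phi psi" and "inj_on psi (omg C)"
    and "th \<in> omg C"
  shows "inner_by B D (psi th) \<longleftrightarrow> inner_by A C th"
proof -
  note psi = diffeo_viaD[OF assms(2)]
  have "dd D (phi a) = wadd D (ract D (psi th) (phi a)) (lact D (phi a) (psi th))
      \<longleftrightarrow> dd C a = wadd C (ract C th a) (lact C a th)" if "a \<in> carrier A" for a
  proof -
    have closed: "dd C a \<in> omg C" "ract C th a \<in> omg C" "lact C a th \<in> omg C"
      "wadd C (ract C th a) (lact C a th) \<in> omg C"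
      using assms(1,4) that unfolding fodc_def bimodule_def by auto
    have "dd D (phi a) = psi (dd C a)"
      "wadd D (ract D (psi th) (phi a)) (lact D (phi a) (psi th))
        = psi (wadd C (ract C th a) (lact C a th))"
      using that closed assms(4) by (simp_all add: psi)
    then show ?thesis
      using inj_on_eq_iff[OF assms(3) closed(1,4)] by simp
  qed
  then show ?thesis
    unfolding inner_by_def psi(2) by simp
qed

locale f2_ring = ring +
  assumes one_add_one: "\<one> \<oplus> \<one> = \<zero>"

lemma f2_ring_iff_f2_algebra: "f2_ring R \<longleftrightarrow> f2_algebra R"
  unfolding f2_algebra_def f2_ring_def f2_ring_axioms_def by blast

context f2_ring
begin

lemma add_self [simp]:
  assumes "a \<in> carrier R"
  shows "a \<oplus> a = \<zero>"
proof -
  have "a \<oplus> a = (\<one> \<oplus> \<one>) \<otimes> a"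
    using assms by (simp add: l_distr)
  then show ?thesis
    using assms by (simp add: one_add_one)
qed

lemma add_self_left [simp]: "a \<in> carrier R \<Longrightarrow> b \<in> carrier R \<Longrightarrow> a \<oplus> (a \<oplus> b) = b"
  by (simp flip: a_assoc)

lemma one_add_iso_bar_alg: "(\<lambda>a. \<one> \<oplus> a) \<in> ring_iso R (bar_alg R)"
proof (rule ring_iso_memI)
  show "bij_betw (\<lambda>a. \<one> \<oplus> a) (carrier R) (carrier (bar_alg R))"
    by (rule bij_betwI[where g = "\<lambda>a. \<one> \<oplus> a"]) (auto simp: bar_alg_def)
qed (auto simp: bar_alg_def l_distr r_distr a_ac)

lemma ring_bar_alg: "ring (bar_alg R)"
proof -
  have "bar_alg R \<lparr>zero := \<one> \<oplus> \<zero>\<rparr> = bar_alg R"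
    by (simp add: bar_alg_def)
  then show ?thesis
    using ring_iso_imp_img_ring[OF one_add_iso_bar_alg] by simp
qed

lemma f2_algebra_bar_alg: "f2_algebra (bar_alg R)"
  using ring_bar_alg by (simp add: f2_algebra_def bar_alg_def)

end

locale f2_bimodule = f2_ring A for A (structure) +
  fixes C :: "('a, 'w) calc" and z :: 'w
  assumes bimodule: "bimodule A C" and wzero: "is_wzero C z"
begin

lemma omg_closed [simp]:
  "w \<in> omg C \<Longrightarrow> v \<in> omg C \<Longrightarrow> wadd C w v \<in> omg C"
  "a \<in> carrier A \<Longrightarrow> w \<in> omg C \<Longrightarrow> lact C a w \<in> omg C"
  "a \<in> carrier A \<Longrightarrow> w \<in> omg C \<Longrightarrow> ract C w a \<in> omg C"
  using bimodule unfolding bimodule_def by auto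

lemma wzero_closed [simp]: "z \<in> omg C"
  and wadd_wzero_left [simp]: "w \<in> omg C \<Longrightarrow> wadd C z w = w"
  using wzero unfolding is_wzero_def by auto

lemma wadd_assoc:
  "u \<in> omg C \<Longrightarrow> v \<in> omg C \<Longrightarrow> w \<in> omg C \<Longrightarrow> wadd C (wadd C u v) w = wadd C u (wadd C v w)"
  and wadd_commute: "u \<in> omg C \<Longrightarrow> v \<in> omg C \<Longrightarrow> wadd C u v = wadd C v u"
  using bimodule unfolding bimodule_def by auto

lemma wadd_left_commute:
  "u \<in> omg C \<Longrightarrow> v \<in> omg C \<Longrightarrow> w \<in> omg C \<Longrightarrow> wadd C u (wadd C v w) = wadd C v (wadd C u w)"
  by (metis wadd_assoc wadd_commute)

lemmas wadd_ac = wadd_assoc wadd_commute wadd_left_commute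

lemma wadd_wzero_right [simp]: "w \<in> omg C \<Longrightarrow> wadd C w z = w"
  using wadd_commute[of w z] by simp

lemma lact_distribs [simp]:
  "a \<in> carrier A \<Longrightarrow> v \<in> omg C \<Longrightarrow> w \<in> omg C \<Longrightarrow> lact C a (wadd C v w) = wadd C (lact C a v) (lact C a w)"
  "a \<in> carrier A \<Longrightarrow> b \<in> carrier A \<Longrightarrow> w \<in> omg C \<Longrightarrow> lact C (a \<oplus> b) w = wadd C (lact C a w) (lact C b w)"
  and ract_distribs [simp]:
  "a \<in> carrier A \<Longrightarrow> v \<in> omg C \<Longrightarrow> w \<in> omg C \<Longrightarrow> ract C (wadd C v w) a = wadd C (ract C v a) (ract C w a)"
  "a \<in> carrier A \<Longrightarrow> b \<in> carrier A \<Longrightarrow> w \<in> omg C \<Longrightarrow> ract C w (a \<oplus> b) = wadd C (ract C w a) (ract C w b)"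
  and lact_one [simp]: "w \<in> omg C \<Longrightarrow> lact C \<one> w = w"
  and ract_one [simp]: "w \<in> omg C \<Longrightarrow> ract C w \<one> = w"
  using bimodule unfolding bimodule_def by auto

lemma wadd_left_cancel:
  assumes "u \<in> omg C" "v \<in> omg C" "w \<in> omg C" and "wadd C u v = wadd C u w"
  shows "v = w"
proof -
  obtain z' where z': "is_wzero C z'" "\<forall>w\<in>omg C. \<exists>v\<in>omg C. wadd C w v = z'"
    using bimodule unfolding bimodule_def by blast
  have "z' = z"
    using z' wzero unfolding is_wzero_def by (metis wadd_commute)
  then obtain u' where u': "u' \<in> omg C" "wadd C u' u = z"
    using z'(2) assms(1) wadd_commute by metis
  then show ?thesis
    using assms by (metis wadd_assoc wadd_wzero_left)
qed

lemma lact_zero: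
  assumes "w \<in> omg C"
  shows "lact C \<zero> w = z"
proof -
  have "wadd C (lact C \<zero> w) (lact C \<zero> w) = wadd C (lact C \<zero> w) z"
    using lact_distribs(2)[of \<zero> \<zero> w] assms by simp
  then show ?thesis
    using wadd_left_cancel assms by (metis omg_closed(2) wzero_closed zero_closed)
qed

lemma wadd_self [simp]: "w \<in> omg C \<Longrightarrow> wadd C w w = z"
  using lact_distribs(2)[of \<one> \<one> w] by (simp add: one_add_one lact_zero)

lemma wadd_self_left [simp]: "w \<in> omg C \<Longrightarrow> v \<in> omg C \<Longrightarrow> wadd C w (wadd C w v) = v"
  by (simp flip: wadd_assoc)

end

locale f2_calculus = f2_bimodule +
  assumes fodc: "fodc A C"
begin

lemma dd_closed [simp]: "a \<in> carrier A \<Longrightarrow> dd C a \<in> omg C"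
  and dd_add [simp]: "a \<in> carrier A \<Longrightarrow> b \<in> carrier A \<Longrightarrow> dd C (a \<oplus> b) = wadd C (dd C a) (dd C b)"
  and dd_mult: "a \<in> carrier A \<Longrightarrow> b \<in> carrier A \<Longrightarrow>
    dd C (a \<otimes> b) = wadd C (ract C (dd C a) b) (lact C a (dd C b))"
  using fodc unfolding fodc_def by auto

lemma dd_one [simp]: "dd C \<one> = z"
  using dd_mult[of \<one> \<one>] by simp

lemma bij_betw_wadd_left:
  assumes "th \<in> omg C"
  shows "bij_betw (wadd C th) (omg C) (omg C)"
  by (rule bij_betwI[where g = "wadd C th"]) (use assms in auto)

lemma diffeo_via_bar_calc:
  assumes "th \<in> omg C"
  shows "diffeo_via A C (bar_alg A) (bar_calc A C th) (\<lambda>a. \<one> \<oplus> a) (wadd C th)"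
  unfolding diffeo_via_def
  using assms one_add_iso_bar_alg by (auto simp: bar_calc_def wadd_ac)

end

lemma f2_calculusI:
  assumes "f2_algebra A" and "fodc A C" and "is_wzero C z"
  shows "f2_calculus A C z"
  using assms f2_ring_iff_f2_algebra[of A]
  by (simp add: f2_calculus_def f2_calculus_axioms_def f2_bimodule_def f2_bimodule_axioms_def fodc_def)

theorem proposition5p3:
  fixes A :: "'a ring" and C :: "('a, 'w) calc" and th :: 'w and z :: 'w
  assumes "f2_algebra A" and "fodc A C" and "th \<in> omg C"
    and "is_wzero C z"
  shows "f2_algebra (bar_alg A) \<and> fodc (bar_alg A) (bar_calc A C th)
    \<and> diffeo_via A C (bar_alg A) (bar_calc A C th)
        (\<lambda>a. \<one>\<^bsub>A\<^esub> \<oplus>\<^bsub>A\<^esub> a) (\<lambda>w. wadd C th w)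
    \<and> is_wzero (bar_calc A C th) th
    \<and> (inner_by A C th \<longleftrightarrow> inner_by (bar_alg A) (bar_calc A C th) z)"
proof -
  interpret f2_calculus A C z
    using f2_calculusI[OF assms(1,2,4)] .
  have diffeo: "diffeo_via A C (bar_alg A) (bar_calc A C th)
      (\<lambda>a. \<one>\<^bsub>A\<^esub> \<oplus>\<^bsub>A\<^esub> a) (wadd C th)"
    using diffeo_via_bar_calc[OF assms(3)] .
  have bij: "bij_betw (wadd C th) (omg C) (omg C)"
    using bij_betw_wadd_left[OF assms(3)] .
  have omg_bar: "omg (bar_calc A C th) = wadd C th ` omg C"
    using bij_betw_imp_surj_on[OF bij] by (simp add: bar_calc_def)
  have "fodc (bar_alg A) (bar_calc A C th)"
    using fodc_transfer[OF ring_axioms fodc diffeo omg_bar] .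
  moreover have "is_wzero (bar_calc A C th) th"
    using is_wzero_transfer[OF wzero diffeo omg_bar] assms(3) by simp
  moreover have "inner_by (bar_alg A) (bar_calc A C th) z \<longleftrightarrow> inner_by A C th"
    using inner_by_transfer[OF fodc diffeo bij_betw_imp_inj_on[OF bij] assms(3)] assms(3) by simp
  ultimately show ?thesis
    using f2_algebra_bar_alg diffeo by auto
qed

end
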